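(* Assume that at each bus either there is no generator or there are at least two generators, i.e., $n_i=0$ or $n_i\ge 2$ for every $i\in\{1,\dots,N_b\}$. Then the inelastic electricity market game has an efficient Nash equilibrium.
   Context: Network: a directed graph $\mathcal G=(\mathcal V,\mathcal E)$ with buses $\mathcal V=\{1,\dots,N_b\}$ and power lines $\mathcal E$; $\mathcal N_i^+=\{j:(i,j)\in\mathcal E\}$, $\mathcal N_i^-=\{j:(j,i)\in\mathcal E\}$. Each line $(i,j)$ carries flow $z_{ij}\in\mathbb R$ with limit $\bar z_{ij}>0$. There are $N$ generators labelled $1,\dots,N$; $G_i$ is the (possibly empty) set of generators at bus $i$, the $G_i$ partition $\{1,\dots,N\}$, and $n_i=|G_i|$. Bus $i$ has load $y_i\ge0$. Generator $n$ has cost $f_n(x)=a_nx^2+c_nx$ with $a_n>0$, $c_n\ge 0$. DC-OPF: minimize $\sum_{n=1}^N f_n(x_n)$ over $(x,z)$ subject to $\sum_{j\in\mathcal N_i^+}z_{ij}-\sum_{j\in\mathcal N_i^-}z_{ji}=\sum_{n\in G_i}x_n-y_i$ for all buses $i$ (the sum over $G_i$ being $0$ if $G_i=\emptyset$), $-\bar z_{ij}\le z_{ij}\le\bar z_{ij}$ for all $(i,j)\in\mathcal E$, and $x\ge 0$. This problem is assumed feasible; $(x^*,z^* )$ denotes an optimizer, and $x^*$ is unique. S-DC-OPF given bids $b\in\mathbb R^N_{\ge0}$: same constraints, objective $\sum_{n=1}^N b_nx_n$. Inelastic electricity market game: players are generators $n$, actions are bids $b_n\ge 0$, and given bids $b$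 and an optimizer $(x^{\rm opt}(b),z^{\rm opt}(b))$ of S-DC-OPF chosen by the operator, player $n$'s payoff is $u_n(b_n,x^{\rm opt}_n(b))=b_nx^{\rm opt}_n(b)-f_n(x^{\rm opt}_n(b))$. Nash equilibrium: a bid profile $b^*\ge0$ for which there exists an optimizer $(x^{\rm opt}(b^* ),z^{\rm opt}(b^* ))$ of S-DC-OPF with bids $b^*$ such that for all $n$, all $b_n\ge0$, and all optimizers $x^{\rm opt}(b_n,b^*_{-n})$ of S-DC-OPF with bids $(b_n,b^*_{-n})$, $u_n(b_n,x^{\rm opt}_n(b_n,b^*_{-n}))\le u_n(b_n^*,x^{\rm opt}_n(b^* ))$. Efficient bid: $b^*\ge0$ such that $(x^*,z^* )$ is an optimizer of S-DC-OPF with bids $b^*$ and $x^*_n=\arg\max_{x\ge0}(b^*_nx-f_n(x))$ for all $n$. An efficient Nash equilibrium is an efficient bid that is a Nash equilibrium. *)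

theory Defs
  imports Complex_Main
begin

text \<open>Buses: finite type 'v. Generators: finite type 'g. The location map
  loc :: 'g => 'v assigns each generator its bus, so G_i = {n. loc n = i}
  (these sets partition the generators). Lines: E :: ('v * 'v) set.
  Flows z :: 'v * 'v => real (required to vanish off E), dispatch x :: 'g => real.\<close>

definition gens_at :: "('g \<Rightarrow> 'v) \<Rightarrow> 'v \<Rightarrow> 'g set" where
  "gens_at loc i = {n. loc n = i}"

definition feasible ::
  "('v::finite \<times> 'v) set \<Rightarrow> ('v \<times> 'v \<Rightarrow> real) \<Rightarrow> ('g::finite \<Rightarrow> 'v) \<Rightarrow> ('v \<Rightarrow> real)
   \<Rightarrow> ('g \<Rightarrow> real) \<Rightarrow> ('v \<times> 'v \<Rightarrow> real) \<Rightarrow> bool" where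
  "feasible E zbar loc y x z \<longleftrightarrow>
     (\<forall>i. (\<Sum>j\<in>{j. (i, j) \<in> E}. z (i, j)) - (\<Sum>j\<in>{j. (j, i) \<in> E}. z (j, i))
           = (\<Sum>n\<in>gens_at loc i. x n) - y i)
   \<and> (\<forall>e\<in>E. - zbar e \<le> z e \<and> z e \<le> zbar e)
   \<and> (\<forall>e. e \<notin> E \<longrightarrow> z e = 0)
   \<and> (\<forall>n. 0 \<le> x n)"

definition gen_cost :: "('g \<Rightarrow> real) \<Rightarrow> ('g \<Rightarrow> real) \<Rightarrow> 'g \<Rightarrow> real \<Rightarrow> real" where
  "gen_cost a c n t = a n * t\<^sup>2 + c n * t"

definition is_opt_DCOPF ::
  "('v::finite \<times> 'v) set \<Rightarrow> ('v \<times> 'v \<Rightarrow> real) \<Rightarrow> ('g::finite \<Rightarrow> 'v) \<Rightarrow> ('v \<Rightarrow> real)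
   \<Rightarrow> ('g \<Rightarrow> real) \<Rightarrow> ('g \<Rightarrow> real)
   \<Rightarrow> ('g \<Rightarrow> real) \<Rightarrow> ('v \<times> 'v \<Rightarrow> real) \<Rightarrow> bool" where
  "is_opt_DCOPF E zbar loc y a c x z \<longleftrightarrow>
     feasible E zbar loc y x z \<and>
     (\<forall>x' z'. feasible E zbar loc y x' z' \<longrightarrow>
        (\<Sum>n\<in>UNIV. gen_cost a c n (x n)) \<le> (\<Sum>n\<in>UNIV. gen_cost a c n (x' n)))"

definition is_opt_SDCOPF ::
  "('v::finite \<times> 'v) set \<Rightarrow> ('v \<times> 'v \<Rightarrow> real) \<Rightarrow> ('g::finite \<Rightarrow> 'v) \<Rightarrow> ('v \<Rightarrow> real)
   \<Rightarrow> ('g \<Rightarrow> real)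
   \<Rightarrow> ('g \<Rightarrow> real) \<Rightarrow> ('v \<times> 'v \<Rightarrow> real) \<Rightarrow> bool" where
  "is_opt_SDCOPF E zbar loc y b x z \<longleftrightarrow>
     feasible E zbar loc y x z \<and>
     (\<forall>x' z'. feasible E zbar loc y x' z' \<longrightarrow>
        (\<Sum>n\<in>UNIV. b n * x n) \<le> (\<Sum>n\<in>UNIV. b n * x' n))"

definition payoff :: "('g \<Rightarrow> real) \<Rightarrow> ('g \<Rightarrow> real) \<Rightarrow> 'g \<Rightarrow> real \<Rightarrow> real \<Rightarrow> real" where
  "payoff a c n bn t = bn * t - gen_cost a c n t"

definition is_Nash ::
  "('v::finite \<times> 'v) set \<Rightarrow> ('v \<times> 'v \<Rightarrow> real) \<Rightarrow> ('g::finite \<Rightarrow> 'v) \<Rightarrow> ('v \<Rightarrow> real)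
   \<Rightarrow> ('g \<Rightarrow> real) \<Rightarrow> ('g \<Rightarrow> real) \<Rightarrow> ('g \<Rightarrow> real) \<Rightarrow> bool" where
  "is_Nash E zbar loc y a c b \<longleftrightarrow>
     (\<forall>n. 0 \<le> b n) \<and>
     (\<exists>x z. is_opt_SDCOPF E zbar loc y b x z \<and>
        (\<forall>n bn. 0 \<le> bn \<longrightarrow>
           (\<forall>x' z'. is_opt_SDCOPF E zbar loc y (b(n := bn)) x' z' \<longrightarrow>
              payoff a c n bn (x' n) \<le> payoff a c n (b n) (x n))))"

definition is_efficient_bid ::
  "('v::finite \<times> 'v) set \<Rightarrow> ('v \<times> 'v \<Rightarrow> real) \<Rightarrow> ('g::finite \<Rightarrow> 'v) \<Rightarrow> ('v \<Rightarrow> real)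
   \<Rightarrow> ('g \<Rightarrow> real) \<Rightarrow> ('g \<Rightarrow> real) \<Rightarrow> ('g \<Rightarrow> real) \<Rightarrow> ('v \<times> 'v \<Rightarrow> real)
   \<Rightarrow> ('g \<Rightarrow> real) \<Rightarrow> bool" where
  "is_efficient_bid E zbar loc y a c xs zs b \<longleftrightarrow>
     (\<forall>n. 0 \<le> b n) \<and>
     is_opt_SDCOPF E zbar loc y b xs zs \<and>
     (\<forall>n. is_arg_max (\<lambda>t. b n * t - gen_cost a c n t) (\<lambda>t. 0 \<le> t) (xs n))"

end

theory Submission
  imports Defs
begin

text \<open>
  The DC-OPF optimum \<open>x*\<close> also minimises the linearised cost \<open>\<Sum> f'_n(x*_n) x_n\<close> over the
  (convex) feasible set. Let every generator bid the smallest marginal cost \<open>f'_m(x*_m)\<close> at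
  its bus. Moving output between generators of one bus does not affect feasibility, so
  a generator with \<open>x*_n > 0\<close> has the cheapest marginal cost at its bus; hence the bids
  still make \<open>x*\<close> optimal, and each \<open>x*_n\<close> maximises the profit \<open>b_n t - f_n(t)\<close> because
  \<open>b_n \<le> f'_n(x*_n)\<close> with equality where \<open>x*_n > 0\<close>. Underbidding only lowers the revenue
  at the concave profit's maximiser. Overbidding, on the other hand, lets a co-located
  competitor (there is one, since \<open>n_i \<ge> 2\<close>) take over all of the generator's output.
\<close>

definition marginal_cost :: "('g \<Rightarrow> real) \<Rightarrow> ('g \<Rightarrow> real) \<Rightarrow> ('g \<Rightarrow> real) \<Rightarrow> 'g \<Rightarrow> real" where
  "marginal_cost a c x n = 2 * a n * x n + c n"

definition bus_min_bid :: "('g \<Rightarrow> 'v) \<Rightarrow> ('g \<Rightarrow> real) \<Rightarrow> 'g \<Rightarrow> real" where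
  "bus_min_bid loc \<beta> n = Min (\<beta> ` gens_at loc (loc n))"

definition concentrate :: "('g \<Rightarrow> 'v) \<Rightarrow> ('v \<Rightarrow> 'g) \<Rightarrow> ('g \<Rightarrow> real) \<Rightarrow> 'g \<Rightarrow> real" where
  "concentrate loc r x k = (if k = r (loc k) then sum x (gens_at loc (loc k)) else 0)"

lemma feasible_convex:
  assumes f: "feasible E zbar loc y x z" and f': "feasible E zbar loc y x' z'"
    and t: "0 \<le> t" "t \<le> 1"
  shows "feasible E zbar loc y (\<lambda>n. (1 - t) * x n + t * x' n) (\<lambda>e. (1 - t) * z e + t * z' e)"
  unfolding feasible_def
proof (intro conjI allI ballI impI)
  fix i
  define net_out where "net_out w = (\<Sum>j\<in>{j. (i, j) \<in> E}. w (i, j)) - (\<Sum>j\<in>{j. (j, i) \<in> E}. w (j, i))"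
    for w :: "_ \<Rightarrow> real"
  have "net_out (\<lambda>e. (1 - t) * z e + t * z' e) = (1 - t) * net_out z + t * net_out z'"
    unfolding net_out_def sum.distrib sum_distrib_left[symmetric] by (simp add: algebra_simps)
  also have "\<dots> = (1 - t) * ((\<Sum>n\<in>gens_at loc i. x n) - y i) + t * ((\<Sum>n\<in>gens_at loc i. x' n) - y i)"
    using f f' unfolding feasible_def net_out_def by simp
  finally show "(\<Sum>j\<in>{j. (i, j) \<in> E}. (1 - t) * z (i, j) + t * z' (i, j))
      - (\<Sum>j\<in>{j. (j, i) \<in> E}. (1 - t) * z (j, i) + t * z' (j, i))
      = (\<Sum>n\<in>gens_at loc i. (1 - t) * x n + t * x' n) - y i"
    unfolding net_out_def sum.distrib sum_distrib_left[symmetric] by (simp add: algebra_simps)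
next
  fix e assume "e \<in> E"
  then have "- z e \<le> zbar e" "z e \<le> zbar e" "- z' e \<le> zbar e" "z' e \<le> zbar e"
    using f f' unfolding feasible_def by auto
  then show "- zbar e \<le> (1 - t) * z e + t * z' e" "(1 - t) * z e + t * z' e \<le> zbar e"
    using convex_bound_le[of "- z e" "zbar e" "- z' e" "1 - t" t]
      convex_bound_le[of "z e" "zbar e" "z' e" "1 - t" t] t by auto
next
  show "(1 - t) * z e + t * z' e = 0" if "e \<notin> E" for e
  proof -
    have "z e = 0" "z' e = 0" using f f' that unfolding feasible_def by blast+
    then show ?thesis by simp
  qed
  show "0 \<le> (1 - t) * x n + t * x' n" for n
    using f f' t unfolding feasible_def by simp
qed

lemma sum_weighted_transfer:
  fixes w x :: "'a \<Rightarrow> real"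
  assumes "finite S" "m \<noteq> n"
  shows "(\<Sum>k\<in>S. w k * (x(n := 0, m := x m + x n)) k)
       = (\<Sum>k\<in>S. w k * x k) + (if m \<in> S then w m * x n else 0) - (if n \<in> S then w n * x n else 0)"
proof -
  have eq: "(\<lambda>k. w k * (x(n := 0, m := x m + x n)) k)
      = (\<lambda>k. w k * x k + (if k = m then w m * x n else 0) - (if k = n then w n * x n else 0))"
    using assms(2) by (auto simp: algebra_simps)
  show ?thesis
    unfolding eq using assms(1) by (simp add: sum.distrib sum_subtractf)
qed

lemma feasible_transfer:
  assumes "feasible E zbar loc y x z" "m \<noteq> n" "loc m = loc n"
  shows "feasible E zbar loc y (x(n := 0, m := x m + x n)) z"
proof -
  have "m \<in> gens_at loc i \<longleftrightarrow> n \<in> gens_at loc i" for i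
    using assms(3) by (simp add: gens_at_def)
  then have "sum (x(n := 0, m := x m + x n)) (gens_at loc i) = sum x (gens_at loc i)" for i
    using sum_weighted_transfer[of "gens_at loc i" m n "\<lambda>_. 1" x] assms(2) by simp
  moreover have "0 \<le> (x(n := 0, m := x m + x n)) k" for k
    using assms(1) unfolding feasible_def by simp
  ultimately show ?thesis using assms(1) unfolding feasible_def by metis
qed

lemma sum_concentrate_bus:
  fixes x :: "'g::finite \<Rightarrow> real"
  assumes r: "\<forall>i. gens_at loc i \<noteq> {} \<longrightarrow> loc (r i) = i"
  shows "sum (concentrate loc r x) (gens_at loc i) = sum x (gens_at loc i)"
proof (cases "gens_at loc i = {}")
  case False
  then have "r i \<in> gens_at loc i" using r by (simp add: gens_at_def)
  moreover have "concentrate loc r x k = (if k = r i then sum x (gens_at loc i) else 0)"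
    if "k \<in> gens_at loc i" for k
    using that unfolding concentrate_def gens_at_def by auto
  ultimately show ?thesis by simp
qed simp

lemma feasible_concentrate:
  assumes "feasible E zbar loc y x z" "\<forall>i. gens_at loc i \<noteq> {} \<longrightarrow> loc (r i) = i"
  shows "feasible E zbar loc y (concentrate loc r x) z"
proof -
  have "0 \<le> concentrate loc r x k" for k
    using assms(1) unfolding feasible_def concentrate_def by (simp add: sum_nonneg)
  then show ?thesis
    using assms sum_concentrate_bus[OF assms(2)] unfolding feasible_def by metis
qed

lemma sum_by_bus:
  fixes f :: "'g::finite \<Rightarrow> real" and loc :: "'g \<Rightarrow> 'v::finite"
  shows "(\<Sum>n\<in>UNIV. f n) = (\<Sum>i\<in>UNIV. sum f (gens_at loc i))"
  using sum.group[of UNIV UNIV loc f] by (simp add: gens_at_def)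

lemma sum_bus_uniform_weights_eq:
  fixes w x x' :: "'g::finite \<Rightarrow> real" and loc :: "'g \<Rightarrow> 'v::finite"
  assumes uniform: "\<forall>m n. loc m = loc n \<longrightarrow> w m = w n"
    and totals: "\<forall>i. sum x (gens_at loc i) = sum x' (gens_at loc i)"
  shows "(\<Sum>n\<in>UNIV. w n * x n) = (\<Sum>n\<in>UNIV. w n * x' n)"
proof -
  define W where "W i = w (SOME k. loc k = i)" for i
  have W: "w k = W i" if "k \<in> gens_at loc i" for k i
  proof -
    have "loc (SOME k. loc k = i) = i" using that by (auto simp: gens_at_def intro: someI)
    then show ?thesis using that uniform unfolding W_def gens_at_def by auto
  qed
  have "(\<Sum>k\<in>gens_at loc i. w k * v k) = W i * sum v (gens_at loc i)" for i and v :: "'g \<Rightarrow> real"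
    using W by (simp add: sum_distrib_left)
  then show ?thesis using totals sum_by_bus[of "\<lambda>n. w n * x n" loc] sum_by_bus[of "\<lambda>n. w n * x' n" loc]
    by simp
qed

lemma marginal_cost_first_order:
  fixes x0 x :: "'g::finite \<Rightarrow> real"
  assumes a: "\<forall>n. 0 \<le> a n"
    and segment_min: "\<forall>t\<in>{0..1}. (\<Sum>n\<in>UNIV. gen_cost a c n (x0 n))
                         \<le> (\<Sum>n\<in>UNIV. gen_cost a c n ((1 - t) * x0 n + t * x n))"
  shows "(\<Sum>n\<in>UNIV. marginal_cost a c x0 n * x0 n) \<le> (\<Sum>n\<in>UNIV. marginal_cost a c x0 n * x n)"
proof (rule ccontr)
  define S where "S = (\<Sum>n\<in>UNIV. marginal_cost a c x0 n * (x n - x0 n))"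
  define Q where "Q = (\<Sum>n\<in>UNIV. a n * (x n - x0 n)\<^sup>2)"
  assume "\<not> ?thesis"
  then have S: "S < 0" unfolding S_def by (simp add: algebra_simps sum_subtractf)
  have Q: "0 \<le> Q" unfolding Q_def using a by (simp add: sum_nonneg)
  have "gen_cost a c n ((1 - t) * x0 n + t * x n)
      = gen_cost a c n (x0 n) + t * (marginal_cost a c x0 n * (x n - x0 n))
        + t\<^sup>2 * (a n * (x n - x0 n)\<^sup>2)" for t n
    unfolding gen_cost_def marginal_cost_def by (simp add: algebra_simps power2_eq_square)
  then have expand: "(\<Sum>n\<in>UNIV. gen_cost a c n ((1 - t) * x0 n + t * x n))
      = (\<Sum>n\<in>UNIV. gen_cost a c n (x0 n)) + t * S + t\<^sup>2 * Q" for t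
    unfolding S_def Q_def by (simp add: sum.distrib sum_distrib_left)
  \<comment> \<open>every \<open>t \<in> (0, -S/Q)\<close> lowers the cost; this one also lies in \<open>(0, 1]\<close>\<close>
  define t where "t = - S / (Q - S)"
  have t: "0 < t" "t \<le> 1" unfolding t_def using S Q by (auto simp: field_simps)
  have "0 \<le> t * S + t\<^sup>2 * Q"
    using segment_min[rule_format, of t] t unfolding expand by simp
  then have "0 \<le> t * (S + t * Q)" by (simp add: algebra_simps power2_eq_square)
  moreover have "S + t * Q = - S\<^sup>2 / (Q - S)"
    unfolding t_def using S Q by (simp add: field_simps power2_eq_square)
  then have "S + t * Q < 0" using S Q by (simp add: divide_neg_pos)
  ultimately show False using mult_pos_neg[OF t(1)] by (simp add: not_le[symmetric])
qed

lemma opt_DCOPF_imp_opt_SDCOPF_marginal_cost: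
  assumes opt: "is_opt_DCOPF E zbar loc y a c x z" and a: "\<forall>n. 0 \<le> a n"
  shows "is_opt_SDCOPF E zbar loc y (marginal_cost a c x) x z"
  unfolding is_opt_SDCOPF_def
proof (intro conjI allI impI)
  show f: "feasible E zbar loc y x z" using opt unfolding is_opt_DCOPF_def by blast
  fix x' z' assume f': "feasible E zbar loc y x' z'"
  show "(\<Sum>n\<in>UNIV. marginal_cost a c x n * x n) \<le> (\<Sum>n\<in>UNIV. marginal_cost a c x n * x' n)"
  proof (rule marginal_cost_first_order[OF a], intro ballI)
    fix t :: real assume "t \<in> {0..1}"
    then show "(\<Sum>n\<in>UNIV. gen_cost a c n (x n))
        \<le> (\<Sum>n\<in>UNIV. gen_cost a c n ((1 - t) * x n + t * x' n))"
      using opt feasible_convex[OF f f'] unfolding is_opt_DCOPF_def by auto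
  qed
qed

lemma opt_SDCOPF_bid_le_colocated:
  assumes opt: "is_opt_SDCOPF E zbar loc y b x z" and pos: "0 < x n" and loc: "loc m = loc n"
  shows "b n \<le> b m"
proof (cases "m = n")
  case False
  have "(\<Sum>k\<in>UNIV. b k * x k) \<le> (\<Sum>k\<in>UNIV. b k * (x(n := 0, m := x m + x n)) k)"
    using opt feasible_transfer[OF _ False loc] unfolding is_opt_SDCOPF_def by blast
  also have "\<dots> = (\<Sum>k\<in>UNIV. b k * x k) + b m * x n - b n * x n"
    using sum_weighted_transfer[of UNIV m n b x] False by simp
  finally show ?thesis using pos by simp
qed simp

lemma bus_min_bid_le: "bus_min_bid loc \<beta> n \<le> \<beta> (n::'g::finite)"
  unfolding bus_min_bid_def by (rule Min_le) (auto simp: gens_at_def)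

lemma bus_min_bid_attained: "\<exists>m. loc m = loc n \<and> \<beta> m = bus_min_bid loc \<beta> (n::'g::finite)"
proof -
  have "bus_min_bid loc \<beta> n \<in> \<beta> ` gens_at loc (loc n)"
    unfolding bus_min_bid_def by (rule Min_in) (auto simp: gens_at_def)
  then show ?thesis by (auto simp: gens_at_def)
qed

lemma bus_min_bid_colocated: "loc m = loc n \<Longrightarrow> bus_min_bid loc \<beta> m = bus_min_bid loc \<beta> n"
  unfolding bus_min_bid_def by simp

lemma bus_min_bid_mult_opt_dispatch:
  fixes \<beta> :: "'g::finite \<Rightarrow> real"
  assumes opt: "is_opt_SDCOPF E zbar loc y \<beta> x z"
  shows "bus_min_bid loc \<beta> n * x n = \<beta> n * x n"
proof (cases "0 < x n")
  case True
  obtain m where "loc m = loc n" "\<beta> m = bus_min_bid loc \<beta> n"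
    using bus_min_bid_attained by blast
  then have "bus_min_bid loc \<beta> n = \<beta> n"
    using opt_SDCOPF_bid_le_colocated[OF opt True] bus_min_bid_le[of loc \<beta> n] by fastforce
  then show ?thesis by simp
next
  case False
  moreover have "0 \<le> x n" using opt unfolding is_opt_SDCOPF_def feasible_def by simp
  ultimately show ?thesis by simp
qed

lemma bus_min_bid_representative:
  fixes loc :: "'g::finite \<Rightarrow> 'v"
  shows "\<exists>r. \<forall>i. gens_at loc i \<noteq> {} \<longrightarrow> loc (r i) = i \<and> \<beta> (r i) = bus_min_bid loc \<beta> (r i)"
proof -
  have "\<exists>m. gens_at loc i \<noteq> {} \<longrightarrow> loc m = i \<and> \<beta> m = bus_min_bid loc \<beta> m" for i
  proof (cases "gens_at loc i = {}")
    case False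
    then obtain n where "loc n = i" by (auto simp: gens_at_def)
    moreover obtain m where "loc m = loc n" "\<beta> m = bus_min_bid loc \<beta> n"
      using bus_min_bid_attained by blast
    ultimately show ?thesis using bus_min_bid_colocated[of loc m n \<beta>] by auto
  qed simp
  then show ?thesis by (intro choice allI)
qed

lemma opt_SDCOPF_bus_min_bid:
  fixes \<beta> :: "'g::finite \<Rightarrow> real"
  assumes opt: "is_opt_SDCOPF E zbar loc y \<beta> x z"
  shows "is_opt_SDCOPF E zbar loc y (bus_min_bid loc \<beta>) x z"
proof -
  let ?b = "bus_min_bid loc \<beta>"
  obtain r where r: "\<forall>i. gens_at loc i \<noteq> {} \<longrightarrow> loc (r i) = i \<and> \<beta> (r i) = ?b (r i)"
    using bus_min_bid_representative[of loc \<beta>] by blast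
  then have r_loc: "\<forall>i. gens_at loc i \<noteq> {} \<longrightarrow> loc (r i) = i" by blast
  have uniform: "\<forall>m n. loc m = loc n \<longrightarrow> ?b m = ?b n"
    by (simp add: bus_min_bid_def)
  have "(\<Sum>n\<in>UNIV. ?b n * x n) \<le> (\<Sum>n\<in>UNIV. ?b n * x' n)"
    if f': "feasible E zbar loc y x' z'" for x' z'
  proof -
    let ?x'' = "concentrate loc r x'"
    have "(\<Sum>n\<in>UNIV. ?b n * x n) = (\<Sum>n\<in>UNIV. \<beta> n * x n)"
      using bus_min_bid_mult_opt_dispatch[OF opt] by (rule sum.cong[OF refl])
    also have "\<dots> \<le> (\<Sum>n\<in>UNIV. \<beta> n * ?x'' n)"
      using opt feasible_concentrate[OF f' r_loc] unfolding is_opt_SDCOPF_def by blast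
    also have "\<dots> = (\<Sum>n\<in>UNIV. ?b n * ?x'' n)"
    proof -
      \<comment> \<open>the concentrated dispatch only uses the cheapest generator of each bus\<close>
      have "\<beta> n * ?x'' n = ?b n * ?x'' n" for n
      proof (cases "r (loc n) = n")
        case True
        have "gens_at loc (loc n) \<noteq> {}" by (auto simp: gens_at_def)
        then have "\<beta> (r (loc n)) = ?b (r (loc n))" using r by blast
        then show ?thesis unfolding True by simp
      qed (auto simp: concentrate_def)
      then show ?thesis by (rule sum.cong[OF refl])
    qed
    also have "\<dots> = (\<Sum>n\<in>UNIV. ?b n * x' n)"
      using sum_concentrate_bus[OF r_loc] by (intro sum_bus_uniform_weights_eq[OF uniform]) blast
    finally show ?thesis .
  qed
  then show ?thesis using opt unfolding is_opt_SDCOPF_def by blast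
qed

lemma payoff_le_mono_bid: "bn \<le> bn' \<Longrightarrow> 0 \<le> t \<Longrightarrow> payoff a c n bn t \<le> payoff a c n bn' t"
  unfolding payoff_def by (simp add: mult_right_mono)

lemma payoff_le_at_marginal_cost:
  assumes "0 \<le> a n" "bn \<le> marginal_cost a c x n" "bn * x n = marginal_cost a c x n * x n" "0 \<le> t"
  shows "payoff a c n bn t \<le> payoff a c n bn (x n)"
proof -
  have "payoff a c n bn t \<le> payoff a c n (marginal_cost a c x n) t"
    using assms(2,4) by (rule payoff_le_mono_bid)
  also have "\<dots> = payoff a c n (marginal_cost a c x n) (x n) - a n * (t - x n)\<^sup>2"
    unfolding payoff_def gen_cost_def marginal_cost_def by (simp add: algebra_simps power2_eq_square)
  also have "\<dots> \<le> payoff a c n (marginal_cost a c x n) (x n)"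
    using assms(1) by simp
  also have "\<dots> = payoff a c n bn (x n)"
    unfolding payoff_def using assms(3) by metis
  finally show ?thesis .
qed

lemma exists_colocated_generator:
  fixes loc :: "'g::finite \<Rightarrow> 'v"
  assumes "card (gens_at loc (loc n)) = 0 \<or> card (gens_at loc (loc n)) \<ge> 2"
  shows "\<exists>m. m \<noteq> n \<and> loc m = loc n"
proof -
  have "n \<in> gens_at loc (loc n)" by (simp add: gens_at_def)
  then have "\<not> card (gens_at loc (loc n)) \<le> Suc 0"
    using assms by (auto simp: card_eq_0_iff)
  then show ?thesis by (simp add: card_le_Suc0_iff_eq gens_at_def) metis
qed

lemma efficient_bus_uniform_bid_is_Nash:
  fixes loc :: "'g::finite \<Rightarrow> 'v::finite"
  assumes eff: "is_efficient_bid E zbar loc y a c xs zs b"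
    and uniform: "\<forall>m n. loc m = loc n \<longrightarrow> b m = b n"
    and gens: "\<forall>i. card (gens_at loc i) = 0 \<or> card (gens_at loc i) \<ge> 2"
  shows "is_Nash E zbar loc y a c b"
proof -
  have b0: "\<forall>n. 0 \<le> b n" and opt: "is_opt_SDCOPF E zbar loc y b xs zs"
    using eff unfolding is_efficient_bid_def by blast+
  have best: "payoff a c n (b n) t \<le> payoff a c n (b n) (xs n)" if "0 \<le> t" for n t
    using eff that unfolding is_efficient_bid_def is_arg_max_def payoff_def by (auto simp: not_less)
  have "payoff a c n bn (x' n) \<le> payoff a c n (b n) (xs n)"
    if opt': "is_opt_SDCOPF E zbar loc y (b(n := bn)) x' z'" for n bn x' z'
  proof -
    have x'0: "0 \<le> x' n" using opt' unfolding is_opt_SDCOPF_def feasible_def by simp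
    show ?thesis
    proof (cases "bn \<le> b n")
      case True
      then show ?thesis using payoff_le_mono_bid[OF True x'0, of a c n] best[OF x'0, of n] by linarith
    next
      case False
      obtain m where m: "m \<noteq> n" "loc m = loc n" using exists_colocated_generator gens by blast
      \<comment> \<open>a generator outbid by a co-located competitor is not dispatched\<close>
      have "x' n = 0"
      proof (rule ccontr)
        assume "x' n \<noteq> 0"
        with x'0 have "0 < x' n" by simp
        from opt_SDCOPF_bid_le_colocated[OF opt' this m(2)] have "bn \<le> b m" using m(1) by simp
        then show False using False uniform m(2) by metis
      qed
      then show ?thesis using best[of 0 n] by (simp add: payoff_def gen_cost_def)
    qed
  qed
  then show ?thesis unfolding is_Nash_def using b0 opt by blast
qed

theorem proposition3p1:
  fixes E :: "('v::finite \<times> 'v) set"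
    and zbar :: "'v \<times> 'v \<Rightarrow> real"
    and loc :: "'g::finite \<Rightarrow> 'v"
    and y :: "'v \<Rightarrow> real"
    and a c :: "'g \<Rightarrow> real"
    and xs :: "'g \<Rightarrow> real"
    and zs :: "'v \<times> 'v \<Rightarrow> real"
  assumes zbar_pos: "\<forall>e\<in>E. 0 < zbar e"
    and y_nonneg: "\<forall>i. 0 \<le> y i"
    and a_pos: "\<forall>n. 0 < a n"
    and c_nonneg: "\<forall>n. 0 \<le> c n"
    and feas: "\<exists>x z. feasible E zbar loc y x z"
    and opt: "is_opt_DCOPF E zbar loc y a c xs zs"
    and uniq: "\<forall>x z. is_opt_DCOPF E zbar loc y a c x z \<longrightarrow> x = xs"
    and gens: "\<forall>i. card (gens_at loc i) = 0 \<or> card (gens_at loc i) \<ge> 2"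
  shows "\<exists>b. is_efficient_bid E zbar loc y a c xs zs b \<and> is_Nash E zbar loc y a c b"
proof -
  define \<beta> where "\<beta> = marginal_cost a c xs"
  define b where "b = bus_min_bid loc \<beta>"
  have a0: "\<forall>n. 0 \<le> a n" using a_pos by (simp add: less_imp_le)
  have opt_\<beta>: "is_opt_SDCOPF E zbar loc y \<beta> xs zs"
    unfolding \<beta>_def using opt_DCOPF_imp_opt_SDCOPF_marginal_cost[OF opt a0] .
  have xs0: "0 \<le> xs n" for n using opt unfolding is_opt_DCOPF_def feasible_def by simp
  have b0: "0 \<le> b n" for n
  proof -
    obtain m where "\<beta> m = b n" using bus_min_bid_attained unfolding b_def by blast
    moreover have "0 \<le> \<beta> m"
      unfolding \<beta>_def marginal_cost_def using a0 c_nonneg xs0[of m] by simp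
    ultimately show ?thesis by simp
  qed
  have "b n * xs n = \<beta> n * xs n" for n
    unfolding b_def by (rule bus_min_bid_mult_opt_dispatch[OF opt_\<beta>])
  then have best: "payoff a c n (b n) t \<le> payoff a c n (b n) (xs n)" if "0 \<le> t" for n t
    using payoff_le_at_marginal_cost[of a n "b n" c xs t] a0 bus_min_bid_le[of loc \<beta> n] that
    unfolding b_def \<beta>_def by simp
  have eff: "is_efficient_bid E zbar loc y a c xs zs b"
    unfolding is_efficient_bid_def is_arg_max_def
    using b0 opt_SDCOPF_bus_min_bid[OF opt_\<beta>] xs0 best
    by (auto simp: b_def payoff_def not_less)
  moreover have "is_Nash E zbar loc y a c b"
    by (rule efficient_bus_uniform_bid_is_Nash[OF eff _ gens]) (simp add: b_def bus_min_bid_def)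
  ultimately show ?thesis by blast
qed

end
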